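(* Let $\varepsilon,\delta,\kappa>0$ (with $\delta,\kappa$ possibly depending on $\varepsilon$) and let $(v_\varepsilon,\varphi_\varepsilon)$ be a minimizer of $G_{\varepsilon,\delta,\kappa}$ in $\mathcal I$ with $v_\varepsilon\ge0$. Then for $\varepsilon>0$ small enough there exists $C>0$, independent of the parameters, such that $$\|1-v_\varepsilon\|_{L^\infty((0,1))}\le C\kappa\sqrt\varepsilon.$$
   Context: For $\varepsilon,\delta,\kappa>0$ and suitable $(v,\varphi)$ on $(0,1)$ let $$G_{\varepsilon,\delta,\kappa}(v,\varphi)=\frac12\int_0^1v'^2+\frac{1}{4\varepsilon^2}\int_0^1(1-v^2)^2+\frac18\int_0^1v^2\varphi'^2+\frac{\delta}{8\varepsilon^2}\int_0^1v^4\sin^2\varphi-\frac\kappa2\int_0^1v^2\varphi'.$$ Let $\mathcal S(v)=\{x\in[0,1]:v(x)=0\}$. The admissible class $\mathcal I$ consists of pairs $(v,\varphi)$ with $v\in H^1((0,1))$, $\varphi$ of class $H^1$ on $(0,1)\setminus\mathcal S(v)$, $\varphi(0)=0$ and $\int_0^1v^2=1$; on $\mathcal S(v)$ the quantities $v^2\varphi'^2$, $v^2\varphi'$ and $v^4\sin^2\varphi$ are set equal to $0$. *)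

theory Defs
  imports "HOL-Analysis.Analysis"
begin

text \<open>H^1((0,1)) in one dimension: v is the (continuous) representative
  v(x) = v(0) + int_0^x dv with dv in L^2(0,1); dv is the weak derivative v'.\<close>
definition H1_01 :: "(real \<Rightarrow> real) \<Rightarrow> (real \<Rightarrow> real) \<Rightarrow> bool" where
  "H1_01 v dv \<longleftrightarrow>
     set_integrable lborel {0..1} dv \<and>
     set_integrable lborel {0..1} (\<lambda>x. (dv x)\<^sup>2) \<and>
     (\<forall>x\<in>{0..1}. v x = v 0 + (LINT t:{0..x}|lborel. dv t))"

definition zero_set :: "(real \<Rightarrow> real) \<Rightarrow> real set" where
  "zero_set v = {x \<in> {0..1}. v x = 0}"

definition nonzero_set :: "(real \<Rightarrow> real) \<Rightarrow> real set" where
  "nonzero_set v = {0..1} - zero_set v"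

definition H1_on :: "real set \<Rightarrow> (real \<Rightarrow> real) \<Rightarrow> (real \<Rightarrow> real) \<Rightarrow> bool" where
  "H1_on U phi dphi \<longleftrightarrow>
     set_integrable lborel U phi \<and>
     set_integrable lborel U (\<lambda>x. (phi x)\<^sup>2) \<and>
     set_integrable lborel U dphi \<and>
     set_integrable lborel U (\<lambda>x. (dphi x)\<^sup>2) \<and>
     (\<forall>a b. a \<le> b \<and> {a..b} \<subseteq> U \<longrightarrow>
        (\<forall>x\<in>{a..b}. phi x = phi a + (LINT t:{a..x}|lborel. dphi t)))"

text \<open>Admissible class I (pairs given together with their weak derivatives).\<close>
definition admissible ::
  "(real \<Rightarrow> real) \<Rightarrow> (real \<Rightarrow> real) \<Rightarrow> (real \<Rightarrow> real) \<Rightarrow> (real \<Rightarrow> real) \<Rightarrow> bool" where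
  "admissible v dv phi dphi \<longleftrightarrow>
     H1_01 v dv \<and> H1_on (nonzero_set v) phi dphi \<and> phi 0 = 0 \<and>
     (LINT x:{0..1}|lborel. (v x)\<^sup>2) = 1"

definition G :: "real \<Rightarrow> real \<Rightarrow> real \<Rightarrow>
    (real \<Rightarrow> real) \<Rightarrow> (real \<Rightarrow> real) \<Rightarrow> (real \<Rightarrow> real) \<Rightarrow> (real \<Rightarrow> real) \<Rightarrow> real" where
  "G \<epsilon> \<delta> \<kappa> v dv phi dphi =
     1/2 * (LINT x:{0..1}|lborel. (dv x)\<^sup>2)
   + 1/(4*\<epsilon>\<^sup>2) * (LINT x:{0..1}|lborel. (1 - (v x)\<^sup>2)\<^sup>2)
   + 1/8 * (LINT x:nonzero_set v|lborel. (v x)\<^sup>2 * (dphi x)\<^sup>2)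
   + \<delta>/(8*\<epsilon>\<^sup>2) * (LINT x:nonzero_set v|lborel. (v x)^4 * (sin (phi x))\<^sup>2)
   - \<kappa>/2 * (LINT x:nonzero_set v|lborel. (v x)\<^sup>2 * dphi x)"

definition is_minimizer ::
  "real \<Rightarrow> real \<Rightarrow> real \<Rightarrow>
    (real \<Rightarrow> real) \<Rightarrow> (real \<Rightarrow> real) \<Rightarrow> (real \<Rightarrow> real) \<Rightarrow> (real \<Rightarrow> real) \<Rightarrow> bool" where
  "is_minimizer \<epsilon> \<delta> \<kappa> v dv phi dphi \<longleftrightarrow>
     admissible v dv phi dphi \<and>
     (\<forall>w dw psi dpsi. admissible w dw psi dpsi \<longrightarrow>
        G \<epsilon> \<delta> \<kappa> v dv phi dphi \<le> G \<epsilon> \<delta> \<kappa> w dw psi dpsi)"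

end

theory Submission
  imports Defs
begin

text \<open>Comparing a minimizer with the constant state \<open>v = 1, \<phi> = 0\<close>, whose energy is zero, and
  completing the square \<open>v\<^sup>2\<phi>'\<^sup>2/8 - \<kappa>v\<^sup>2\<phi>'/2 \<ge> -\<kappa>\<^sup>2v\<^sup>2/2\<close> together with \<open>\<integral>v\<^sup>2 = 1\<close> gives
  \<open>\<integral>v'\<^sup>2 \<le> \<kappa>\<^sup>2\<close> and \<open>\<integral>(1 - v\<^sup>2)\<^sup>2 \<le> 2\<epsilon>\<^sup>2\<kappa>\<^sup>2\<close>. The first bound makes \<open>v\<close> Hoelder continuous,
  \<open>|v t - v s| \<le> \<kappa> \<surd>|t - s|\<close>, so a deviation \<open>m = |1 - v x\<^sub>0|\<close> persists, at least \<open>m/2\<close>,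
  on an interval of length \<open>min (1/2) (m\<^sup>2/(4\<kappa>\<^sup>2))\<close> around \<open>x\<^sub>0\<close>. There \<open>(1 - v\<^sup>2)\<^sup>2 \<ge> m\<^sup>2/4\<close>
  because \<open>v \<ge> 0\<close>, and the second bound forces \<open>m \<le> 3\<kappa>\<surd>\<epsilon>\<close> once \<open>\<epsilon> < 1/2\<close>.\<close>

lemma set_integral_nonneg_real:
  fixes f :: "'a \<Rightarrow> real"
  assumes "\<And>x. x \<in> A \<Longrightarrow> 0 \<le> f x"
  shows "0 \<le> (LINT x:A|M. f x)"
  unfolding set_lebesgue_integral_def
  by (rule integral_nonneg_AE) (use assms in \<open>auto simp: indicator_def\<close>)

lemma set_integral_mono_set_nonneg:
  fixes f :: "'a \<Rightarrow> real"
  assumes "A \<subseteq> B" "set_integrable M A f" "set_integrable M B f" "\<And>x. x \<in> B \<Longrightarrow> 0 \<le> f x"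
  shows "(LINT x:A|M. f x) \<le> (LINT x:B|M. f x)"
  using assms unfolding set_integrable_def set_lebesgue_integral_def
  by (intro integral_mono) (auto simp: indicator_def)

lemma set_integrable_continuous_mult:
  fixes f g :: "real \<Rightarrow> real"
  assumes g: "set_integrable lborel U g" and "U \<subseteq> S" "compact S" and f: "continuous_on S f"
  shows "set_integrable lborel U (\<lambda>x. f x * g x)"
proof -
  obtain B where B: "\<And>x. x \<in> S \<Longrightarrow> \<bar>f x\<bar> \<le> B"
    using compact_imp_bounded[OF compact_continuous_image[OF f \<open>compact S\<close>]]
    unfolding bounded_iff by auto
  have "(\<lambda>x. indicator S x *\<^sub>R f x) \<in> borel_measurable borel"
    using borel_measurable_continuous_on_indicator[OF _ f] \<open>compact S\<close>
    by (simp add: borel_closed compact_imp_closed)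
  moreover have "(\<lambda>x. indicator U x *\<^sub>R g x) \<in> borel_measurable lborel"
    using g unfolding set_integrable_def by (rule borel_measurable_integrable)
  ultimately have "(\<lambda>x. (indicator S x *\<^sub>R f x) * (indicator U x *\<^sub>R g x)) \<in> borel_measurable lborel"
    by measurable
  also have "(\<lambda>x. (indicator S x *\<^sub>R f x) * (indicator U x *\<^sub>R g x)) = (\<lambda>x. indicator U x *\<^sub>R (f x * g x))"
    using \<open>U \<subseteq> S\<close> by (intro ext) (auto simp: indicator_def)
  finally have meas: "set_borel_measurable lborel U (\<lambda>x. f x * g x)"
    unfolding set_borel_measurable_def .
  have "norm (f x * g x) \<le> norm (B * g x)" if "x \<in> U" for x
    using B \<open>U \<subseteq> S\<close> that unfolding real_norm_def abs_mult
    by (intro mult_right_mono) force+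
  then have "AE x in lborel. x \<in> U \<longrightarrow> norm (f x * g x) \<le> norm (B * g x)"
    by simp
  then show ?thesis
    by (rule set_integrable_bound[OF set_integrable_mult_right[OF g, of B] meas])
qed

section \<open>One-dimensional Sobolev functions\<close>

lemma H1_01_integrable:
  assumes "H1_01 v dv"
  shows "dv integrable_on {0..1}" and "(\<lambda>x. (dv x)\<^sup>2) integrable_on {0..1}"
    and "(LINT x:{0..1}|lborel. (dv x)\<^sup>2) = integral {0..1} (\<lambda>x. (dv x)\<^sup>2)"
  using assms set_borel_integral_eq_integral unfolding H1_01_def by blast+

lemma H1_01_representation:
  assumes "H1_01 v dv" "x \<in> {0..1}"
  shows "v x = v 0 + integral {0..x} dv"
proof -
  have int: "set_integrable lborel {0..1} dv"
    and rep: "v x = v 0 + (LINT t:{0..x}|lborel. dv t)"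
    using assms unfolding H1_01_def by blast+
  have "set_integrable lborel {0..x} dv"
    by (rule set_integrable_subset[OF int]) (use assms in auto)
  then show ?thesis
    using rep set_borel_integral_eq_integral(2) by metis
qed

lemma H1_01_continuous_on:
  assumes "H1_01 v dv"
  shows "continuous_on {0..1} v"
proof -
  have "continuous_on {0..1} (\<lambda>x. v 0 + integral {0..x} dv)"
    by (intro continuous_intros indefinite_integral_continuous_1 H1_01_integrable[OF assms])
  then show ?thesis
    by (rule continuous_on_eq) (use H1_01_representation[OF assms] in metis)
qed

lemma H1_01_increment:
  assumes "H1_01 v dv" "0 \<le> s" "s \<le> t" "t \<le> 1"
  shows "v t - v s = integral {s..t} dv"
proof -
  have "dv integrable_on {0..t}"
    by (rule integrable_on_subinterval[OF H1_01_integrable(1)[OF assms(1)]]) (use assms in auto)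
  then have "integral {0..s} dv + integral {s..t} dv = integral {0..t} dv"
    by (rule Henstock_Kurzweil_Integration.integral_combine[OF assms(2,3)])
  then show ?thesis
    using H1_01_representation[OF assms(1), of t] H1_01_representation[OF assms(1), of s] assms
    by simp
qed

text \<open>Young's inequality \<open>|v'| \<le> r/2 + v'\<^sup>2/(2r)\<close> under the integral; optimising in \<open>r\<close>
  gives the Hoelder bound of the next lemma.\<close>
lemma H1_01_oscillation_bound:
  assumes H1: "H1_01 v dv" and "0 \<le> s" "s \<le> t" "t \<le> 1" "0 < r"
  shows "\<bar>v t - v s\<bar> \<le> r * (t - s) / 2 + integral {0..1} (\<lambda>x. (dv x)\<^sup>2) / (2 * r)"
proof -
  have sub: "{s..t} \<subseteq> {0..1}" using assms by auto
  have di: "dv integrable_on {s..t}" and d2: "(\<lambda>x. (dv x)\<^sup>2) integrable_on {s..t}"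
    using integrable_on_subinterval[OF H1_01_integrable(1)[OF H1] sub]
      integrable_on_subinterval[OF H1_01_integrable(2)[OF H1] sub] by auto
  have young: "norm (dv x) \<le> r / 2 + (1 / (2 * r)) *\<^sub>R (dv x)\<^sup>2" for x
  proof -
    have "0 \<le> (r - \<bar>dv x\<bar>)\<^sup>2" by simp
    then have "2 * r * \<bar>dv x\<bar> \<le> r\<^sup>2 + (dv x)\<^sup>2" by (simp add: power2_eq_square algebra_simps)
    then show ?thesis using \<open>0 < r\<close> by (simp add: field_simps power2_eq_square)
  qed
  have "\<bar>v t - v s\<bar> = norm (integral {s..t} dv)"
    using H1_01_increment[OF H1 assms(2-4)] by simp
  also have "\<dots> \<le> integral {s..t} (\<lambda>x. r / 2 + (1 / (2 * r)) *\<^sub>R (dv x)\<^sup>2)"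
    by (rule integral_norm_bound_integral[OF di _ young])
       (intro integrable_add integrable_cmul d2 integrable_const_ivl)
  also have "\<dots> = integral {s..t} (\<lambda>x. r / 2) + integral {s..t} (\<lambda>x. (1 / (2 * r)) *\<^sub>R (dv x)\<^sup>2)"
    by (rule integral_add) (intro integrable_cmul d2 integrable_const_ivl)+
  also have "\<dots> = r * (t - s) / 2 + integral {s..t} (\<lambda>x. (dv x)\<^sup>2) / (2 * r)"
    using \<open>s \<le> t\<close> by (simp add: content_real)
  also have "\<dots> \<le> r * (t - s) / 2 + integral {0..1} (\<lambda>x. (dv x)\<^sup>2) / (2 * r)"
    using integral_subset_le[OF sub d2 H1_01_integrable(2)[OF H1]] \<open>0 < r\<close>
    by (simp add: divide_right_mono)
  finally show ?thesis .
qed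

lemma H1_01_hoelder_bound:
  assumes H1: "H1_01 v dv" and "s \<in> {0..1}" "t \<in> {0..1}"
    and "integral {0..1} (\<lambda>x. (dv x)\<^sup>2) \<le> \<kappa>\<^sup>2" "0 < \<kappa>"
  shows "\<bar>v t - v s\<bar> \<le> \<kappa> * sqrt \<bar>t - s\<bar>"
proof -
  have ordered: "\<bar>v t - v s\<bar> \<le> \<kappa> * sqrt (t - s)" if "s \<in> {0..1}" "t \<in> {0..1}" "s < t" for s t
  proof -
    define h where "h = sqrt (t - s)"
    have "0 < h" "t - s = h\<^sup>2" using \<open>s < t\<close> by (simp_all add: h_def)
    have "0 < \<kappa> / h" using \<open>0 < h\<close> \<open>0 < \<kappa>\<close> by simp
    have "\<bar>v t - v s\<bar> \<le> \<kappa> / h * (t - s) / 2 + integral {0..1} (\<lambda>x. (dv x)\<^sup>2) / (2 * (\<kappa> / h))"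
      by (rule H1_01_oscillation_bound[OF H1 _ _ _ \<open>0 < \<kappa> / h\<close>]) (use that in auto)
    also have "\<dots> \<le> \<kappa> / h * (t - s) / 2 + \<kappa>\<^sup>2 / (2 * (\<kappa> / h))"
      using divide_right_mono[OF assms(4), of "2 * (\<kappa> / h)"] \<open>0 < \<kappa> / h\<close> by simp
    also have "\<dots> = \<kappa> * h"
      using \<open>0 < h\<close> \<open>0 < \<kappa>\<close> unfolding \<open>t - s = h\<^sup>2\<close> by (simp add: field_simps power2_eq_square)
    finally show ?thesis by (simp add: h_def)
  qed
  consider "s < t" | "t < s" | "s = t" by linarith
  then show ?thesis
  proof cases
    case 1
    then show ?thesis using ordered[of s t] assms(2,3) by simp
  next
    case 2
    then show ?thesis using ordered[of t s] assms(2,3) by (simp add: abs_minus_commute)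
  qed (use \<open>0 < \<kappa>\<close> in simp)
qed

lemma abs_one_minus_le_abs_one_minus_square:
  fixes y :: real
  assumes "0 \<le> y"
  shows "\<bar>1 - y\<bar> \<le> \<bar>1 - y\<^sup>2\<bar>"
proof -
  have "1 - y\<^sup>2 = (1 - y) * (1 + y)" by (simp add: power2_eq_square algebra_simps)
  then have "\<bar>1 - y\<^sup>2\<bar> = \<bar>1 - y\<bar> * (1 + y)"
    using assms by (simp add: abs_mult)
  then show ?thesis using mult_left_mono[of 1 "1 + y" "\<bar>1 - y\<bar>"] assms by simp
qed

text \<open>The two regimes of the interval length \<open>min (1/2) (m\<^sup>2/(4\<kappa>\<^sup>2))\<close> give \<open>m \<le> 4\<epsilon>\<kappa>\<close>
  and \<open>m\<^sup>4 \<le> 32\<epsilon>\<^sup>2\<kappa>\<^sup>4\<close> respectively; both are below \<open>3\<kappa>\<surd>\<epsilon>\<close> for \<open>\<epsilon> < 1/2\<close>.\<close>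
lemma length_energy_tradeoff:
  fixes \<epsilon> \<kappa> m :: real
  assumes "0 < \<epsilon>" "\<epsilon> < 1/2" "0 < \<kappa>" "0 \<le> m"
    and tradeoff: "min (1/2) (m\<^sup>2 / (4 * \<kappa>\<^sup>2)) * m\<^sup>2 \<le> 8 * \<epsilon>\<^sup>2 * \<kappa>\<^sup>2"
  shows "m \<le> 3 * \<kappa> * sqrt \<epsilon>"
proof (rule ccontr)
  assume "\<not> m \<le> 3 * \<kappa> * sqrt \<epsilon>"
  then have "(3 * \<kappa> * sqrt \<epsilon>)\<^sup>2 < m\<^sup>2"
    using assms by (intro power_strict_mono) auto
  then have big: "9 * \<kappa>\<^sup>2 * \<epsilon> < m\<^sup>2"
    using \<open>0 < \<epsilon>\<close> by (simp add: power_mult_distrib)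
  show False
  proof (cases "1/2 \<le> m\<^sup>2 / (4 * \<kappa>\<^sup>2)")
    case True
    then have "m\<^sup>2 \<le> 16 * \<epsilon>\<^sup>2 * \<kappa>\<^sup>2" using tradeoff by simp
    then have "9 * (\<kappa>\<^sup>2 * \<epsilon>) < (16 * \<epsilon>) * (\<kappa>\<^sup>2 * \<epsilon>)"
      using big by (simp add: power2_eq_square algebra_simps)
    then show False using assms by (simp add: mult_less_cancel_right)
  next
    case False
    have "0 < 9 * (\<kappa>\<^sup>2 * \<epsilon>)" using assms by simp
    then have "0 < m\<^sup>2" using big by linarith
    from False have "m\<^sup>2 * m\<^sup>2 \<le> 32 * (\<epsilon> * \<kappa>\<^sup>2)\<^sup>2"
      using tradeoff \<open>0 < \<kappa>\<close> by (simp add: field_simps power2_eq_square)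
    moreover have "(9 * (\<kappa>\<^sup>2 * \<epsilon>)) * (9 * (\<kappa>\<^sup>2 * \<epsilon>)) < m\<^sup>2 * m\<^sup>2"
      using big \<open>0 < \<epsilon>\<close> \<open>0 < m\<^sup>2\<close> by (intro mult_strict_mono) (simp_all add: mult.assoc)
    moreover have "0 < (\<epsilon> * \<kappa>\<^sup>2)\<^sup>2" using assms by simp
    ultimately show False by (simp add: power2_eq_square algebra_simps)
  qed
qed

lemma H1_01_deviation_from_one:
  assumes H1: "H1_01 v dv" and nonneg: "\<forall>x\<in>{0..1}. 0 \<le> v x"
    and "0 < \<epsilon>" "\<epsilon> < 1/2" "0 < \<kappa>"
    and D: "integral {0..1} (\<lambda>x. (dv x)\<^sup>2) \<le> \<kappa>\<^sup>2"
    and W: "integral {0..1} (\<lambda>x. (1 - (v x)\<^sup>2)\<^sup>2) \<le> 2 * \<epsilon>\<^sup>2 * \<kappa>\<^sup>2"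
    and x0: "x0 \<in> {0..1}"
  shows "\<bar>1 - v x0\<bar> \<le> 3 * \<kappa> * sqrt \<epsilon>"
proof (rule length_energy_tradeoff[OF \<open>0 < \<epsilon>\<close> \<open>\<epsilon> < 1/2\<close> \<open>0 < \<kappa>\<close> abs_ge_zero])
  define m where "m = \<bar>1 - v x0\<bar>"
  define l where "l = min (1/2) (m\<^sup>2 / (4 * \<kappa>\<^sup>2))"
  define a where "a = min x0 (1 - l)"
  define g where "g = (\<lambda>x. (1 - (v x)\<^sup>2)\<^sup>2)"
  have "0 \<le> l" "l \<le> 1/2" "l \<le> m\<^sup>2 / (4 * \<kappa>\<^sup>2)" by (simp_all add: l_def)
  then have I: "{a..a + l} \<subseteq> {0..1}" "x0 \<in> {a..a + l}"
    using x0 by (auto simp: a_def)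
  have "sqrt l \<le> sqrt (m\<^sup>2 / (4 * \<kappa>\<^sup>2))"
    using \<open>l \<le> m\<^sup>2 / (4 * \<kappa>\<^sup>2)\<close> by (rule real_sqrt_le_mono)
  also have "\<dots> = m / (2 * \<kappa>)"
    using \<open>0 < \<kappa>\<close> by (simp add: m_def real_sqrt_divide real_sqrt_mult)
  finally have "\<kappa> * sqrt l \<le> m / 2"
    using \<open>0 < \<kappa>\<close> by (simp add: field_simps)
  have far: "m\<^sup>2 / 4 \<le> g t" if t: "t \<in> {a..a + l}" for t
  proof -
    have "\<bar>v t - v x0\<bar> \<le> \<kappa> * sqrt \<bar>t - x0\<bar>"
      using H1_01_hoelder_bound[OF H1 _ _ D \<open>0 < \<kappa>\<close>] x0 t I by auto
    also have "\<dots> \<le> \<kappa> * sqrt l"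
      using t I \<open>0 < \<kappa>\<close> by (intro mult_left_mono real_sqrt_le_mono) auto
    also have "\<dots> \<le> m / 2" by fact
    moreover have "m \<le> \<bar>1 - v t\<bar> + \<bar>v t - v x0\<bar>"
      using abs_triangle_ineq[of "1 - v t" "v t - v x0"] by (simp add: m_def)
    ultimately have "m / 2 \<le> \<bar>1 - v t\<bar>" by argo
    also have "\<dots> \<le> \<bar>1 - (v t)\<^sup>2\<bar>"
      using nonneg t I by (intro abs_one_minus_le_abs_one_minus_square) auto
    finally have "(m / 2)\<^sup>2 \<le> \<bar>1 - (v t)\<^sup>2\<bar>\<^sup>2"
      by (rule power_mono) (simp add: m_def)
    then show ?thesis by (simp add: g_def power_divide)
  qed
  have g01: "g integrable_on {0..1}"
    unfolding g_def by (intro integrable_continuous_real continuous_intros H1_01_continuous_on[OF H1])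
  then have gI: "g integrable_on {a..a + l}"
    by (rule integrable_on_subinterval[OF _ I(1)])
  have "l * (m\<^sup>2 / 4) = integral {a..a + l} (\<lambda>_. m\<^sup>2 / 4)"
    using \<open>0 \<le> l\<close> by (simp add: content_real)
  also have "\<dots> \<le> integral {a..a + l} g"
    using far by (intro integral_le integrable_const_ivl gI) auto
  also have "\<dots> \<le> integral {0..1} g"
    by (rule integral_subset_le[OF I(1) gI g01]) (simp add: g_def)
  finally show "min (1/2) (\<bar>1 - v x0\<bar>\<^sup>2 / (4 * \<kappa>\<^sup>2)) * \<bar>1 - v x0\<bar>\<^sup>2 \<le> 8 * \<epsilon>\<^sup>2 * \<kappa>\<^sup>2"
    using W unfolding g_def l_def m_def by simp
qed

section \<open>Energy bounds for minimizers\<close>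

lemma nonzero_set_measurable:
  assumes "continuous_on {0..1} v"
  shows "nonzero_set v \<in> sets lborel"
proof -
  have "closed (zero_set v)"
    unfolding zero_set_def by (rule continuous_closed_preimage_constant[OF assms]) simp
  then show ?thesis
    unfolding nonzero_set_def by (intro sets.Diff) (simp_all add: borel_closed)
qed

lemma completed_square_lower_bound:
  fixes a d k :: real
  shows "- (k\<^sup>2 / 2) * a\<^sup>2 \<le> 1/8 * (a\<^sup>2 * d\<^sup>2) - k/2 * (a\<^sup>2 * d)"
proof -
  have "1/8 * (a\<^sup>2 * d\<^sup>2) - k/2 * (a\<^sup>2 * d) + (k\<^sup>2 / 2) * a\<^sup>2 = a\<^sup>2 * (d - 2 * k)\<^sup>2 / 8"
    by (simp add: power2_eq_square algebra_simps)
  moreover have "0 \<le> a\<^sup>2 * (d - 2 * k)\<^sup>2 / 8" by simp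
  ultimately show ?thesis by linarith
qed

lemma admissible_phase_energy_lower_bound:
  assumes adm: "admissible v dv phi dphi"
  shows "- (\<kappa>\<^sup>2 / 2) \<le> 1/8 * (LINT x:nonzero_set v|lborel. (v x)\<^sup>2 * (dphi x)\<^sup>2)
                          - \<kappa>/2 * (LINT x:nonzero_set v|lborel. (v x)\<^sup>2 * dphi x)"
proof -
  define U where "U = nonzero_set v"
  have H1: "H1_01 v dv" and H1on: "H1_on U phi dphi"
    and norm1: "(LINT x:{0..1}|lborel. (v x)\<^sup>2) = 1"
    using adm unfolding admissible_def U_def by auto
  have cont: "continuous_on {0..1} (\<lambda>x. (v x)\<^sup>2)"
    by (intro continuous_intros H1_01_continuous_on[OF H1])
  have U: "U \<subseteq> {0..1}" "U \<in> sets lborel"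
    using nonzero_set_measurable[OF H1_01_continuous_on[OF H1]]
    unfolding U_def nonzero_set_def by auto
  have iV01: "set_integrable lborel {0..1} (\<lambda>x. (v x)\<^sup>2)"
    by (rule borel_integrable_atLeastAtMost'[OF cont])
  have iV: "set_integrable lborel U (\<lambda>x. (v x)\<^sup>2)"
    by (rule set_integrable_subset[OF iV01 U(2,1)])
  have iA: "set_integrable lborel U (\<lambda>x. (v x)\<^sup>2 * (dphi x)\<^sup>2)"
    and iB: "set_integrable lborel U (\<lambda>x. (v x)\<^sup>2 * dphi x)"
    using H1on U(1) cont unfolding H1_on_def
    by (auto intro: set_integrable_continuous_mult[of U _ "{0..1}"])
  have "- (\<kappa>\<^sup>2 / 2) * (LINT x:U|lborel. (v x)\<^sup>2)
      = (LINT x:U|lborel. - (\<kappa>\<^sup>2 / 2) * (v x)\<^sup>2)"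
    by (rule set_integral_mult_right[symmetric])
  also have "\<dots> \<le> (LINT x:U|lborel. 1/8 * ((v x)\<^sup>2 * (dphi x)\<^sup>2) - \<kappa>/2 * ((v x)\<^sup>2 * dphi x))"
    using iV iA iB by (intro set_integral_mono completed_square_lower_bound set_integrable_mult_right) auto
  also have "\<dots> = 1/8 * (LINT x:U|lborel. (v x)\<^sup>2 * (dphi x)\<^sup>2) - \<kappa>/2 * (LINT x:U|lborel. (v x)\<^sup>2 * dphi x)"
    using iA iB by simp
  finally have "- (\<kappa>\<^sup>2 / 2) * (LINT x:U|lborel. (v x)\<^sup>2)
      \<le> 1/8 * (LINT x:U|lborel. (v x)\<^sup>2 * (dphi x)\<^sup>2) - \<kappa>/2 * (LINT x:U|lborel. (v x)\<^sup>2 * dphi x)" .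
  moreover have "(LINT x:U|lborel. (v x)\<^sup>2) \<le> 1"
    using set_integral_mono_set_nonneg[OF U(1) iV iV01] norm1 by simp
  then have "\<kappa>\<^sup>2 / 2 * (LINT x:U|lborel. (v x)\<^sup>2) \<le> \<kappa>\<^sup>2 / 2"
    using mult_left_mono[of _ 1 "\<kappa>\<^sup>2 / 2"] by simp
  ultimately show ?thesis
    unfolding U_def by linarith
qed

lemma admissible_G_lower_bound:
  assumes adm: "admissible v dv phi dphi" and "0 \<le> \<delta>"
  shows "1/2 * integral {0..1} (\<lambda>x. (dv x)\<^sup>2) + 1/(4*\<epsilon>\<^sup>2) * integral {0..1} (\<lambda>x. (1 - (v x)\<^sup>2)\<^sup>2)
           - \<kappa>\<^sup>2 / 2 \<le> G \<epsilon> \<delta> \<kappa> v dv phi dphi"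
proof -
  have H1: "H1_01 v dv" using adm unfolding admissible_def by blast
  have "continuous_on {0..1} (\<lambda>x. (1 - (v x)\<^sup>2)\<^sup>2)"
    by (intro continuous_intros H1_01_continuous_on[OF H1])
  then have W: "(LINT x:{0..1}|lborel. (1 - (v x)\<^sup>2)\<^sup>2) = integral {0..1} (\<lambda>x. (1 - (v x)\<^sup>2)\<^sup>2)"
    by (intro set_borel_integral_eq_integral(2) borel_integrable_atLeastAtMost')
  have "0 \<le> \<delta>/(8*\<epsilon>\<^sup>2) * (LINT x:nonzero_set v|lborel. (v x)^4 * (sin (phi x))\<^sup>2)"
    using \<open>0 \<le> \<delta>\<close> by (intro mult_nonneg_nonneg set_integral_nonneg_real) auto
  then show ?thesis
    using admissible_phase_energy_lower_bound[OF adm, of \<kappa>]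
    unfolding G_def W H1_01_integrable(3)[OF H1, symmetric] by linarith
qed

lemma admissible_one:
  "admissible (\<lambda>_. 1) (\<lambda>_. 0) (\<lambda>_. 0) (\<lambda>_. 0)"
proof -
  have "(LINT (x::real):{0..1}|lborel. 1) = (1::real)"
    using set_borel_integral_eq_integral(2)[OF borel_integrable_atLeastAtMost'[of 0 1 "\<lambda>x. 1::real"]]
    by simp
  then show ?thesis
    unfolding admissible_def H1_01_def H1_on_def by (simp add: set_integrable_def)
qed

lemma G_one: "G \<epsilon> \<delta> \<kappa> (\<lambda>_. 1) (\<lambda>_. 0) (\<lambda>_. 0) (\<lambda>_. 0) = 0"
  unfolding G_def by simp

lemma minimizer_energy_bounds:
  assumes mini: "is_minimizer \<epsilon> \<delta> \<kappa> v dv phi dphi" and "0 < \<epsilon>" "0 \<le> \<delta>"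
  shows "integral {0..1} (\<lambda>x. (dv x)\<^sup>2) \<le> \<kappa>\<^sup>2"
    and "integral {0..1} (\<lambda>x. (1 - (v x)\<^sup>2)\<^sup>2) \<le> 2 * \<epsilon>\<^sup>2 * \<kappa>\<^sup>2"
proof -
  have adm: "admissible v dv phi dphi"
    and "G \<epsilon> \<delta> \<kappa> v dv phi dphi \<le> G \<epsilon> \<delta> \<kappa> (\<lambda>_. 1) (\<lambda>_. 0) (\<lambda>_. 0) (\<lambda>_. 0)"
    using mini admissible_one unfolding is_minimizer_def by blast+
  then have bound: "1/2 * integral {0..1} (\<lambda>x. (dv x)\<^sup>2)
      + 1/(4*\<epsilon>\<^sup>2) * integral {0..1} (\<lambda>x. (1 - (v x)\<^sup>2)\<^sup>2) \<le> \<kappa>\<^sup>2 / 2"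
    using admissible_G_lower_bound[OF adm \<open>0 \<le> \<delta>\<close>, of \<epsilon> \<kappa>] G_one by simp
  have H1: "H1_01 v dv" using adm unfolding admissible_def by blast
  have D: "0 \<le> integral {0..1} (\<lambda>x. (dv x)\<^sup>2)"
    by (intro integral_nonneg H1_01_integrable(2)[OF H1]) simp
  have W: "0 \<le> 1/(4*\<epsilon>\<^sup>2) * integral {0..1} (\<lambda>x. (1 - (v x)\<^sup>2)\<^sup>2)"
    by (intro mult_nonneg_nonneg integral_nonneg integrable_continuous_real
        continuous_intros H1_01_continuous_on[OF H1]) simp_all
  show "integral {0..1} (\<lambda>x. (dv x)\<^sup>2) \<le> \<kappa>\<^sup>2"
    using bound W by linarith
  have "1/(4*\<epsilon>\<^sup>2) * integral {0..1} (\<lambda>x. (1 - (v x)\<^sup>2)\<^sup>2) \<le> \<kappa>\<^sup>2 / 2"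
    using bound D by linarith
  then show "integral {0..1} (\<lambda>x. (1 - (v x)\<^sup>2)\<^sup>2) \<le> 2 * \<epsilon>\<^sup>2 * \<kappa>\<^sup>2"
    using \<open>0 < \<epsilon>\<close> by (simp add: field_simps)
qed

theorem proposition16:
  "\<exists>C>0. \<exists>\<epsilon>0>0. \<forall>\<epsilon> \<delta> \<kappa> v dv phi dphi.
     0 < \<epsilon> \<and> \<epsilon> < \<epsilon>0 \<and> 0 < \<delta> \<and> 0 < \<kappa> \<and>
     is_minimizer \<epsilon> \<delta> \<kappa> v dv phi dphi \<and> (\<forall>x\<in>{0..1}. 0 \<le> v x) \<longrightarrow>
     (\<forall>x\<in>{0..1}. \<bar>1 - v x\<bar> \<le> C * \<kappa> * sqrt \<epsilon>)"
proof (rule exI[of _ 3], rule conjI, simp, rule exI[of _ "1/2"], intro conjI allI impI ballI)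
  fix \<epsilon> \<delta> \<kappa> :: real and v dv phi dphi :: "real \<Rightarrow> real" and x :: real
  assume H: "0 < \<epsilon> \<and> \<epsilon> < 1/2 \<and> 0 < \<delta> \<and> 0 < \<kappa> \<and>
     is_minimizer \<epsilon> \<delta> \<kappa> v dv phi dphi \<and> (\<forall>x\<in>{0..1}. 0 \<le> v x)" and "x \<in> {0..1}"
  then have mini: "is_minimizer \<epsilon> \<delta> \<kappa> v dv phi dphi" and "0 < \<epsilon>" "0 \<le> \<delta>" by auto
  have "H1_01 v dv" using mini unfolding is_minimizer_def admissible_def by blast
  then show "\<bar>1 - v x\<bar> \<le> 3 * \<kappa> * sqrt \<epsilon>"
    using H \<open>x \<in> {0..1}\<close> minimizer_energy_bounds[OF mini \<open>0 < \<epsilon>\<close> \<open>0 \<le> \<delta>\<close>]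
    by (intro H1_01_deviation_from_one) auto
qed simp

end
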